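(* For every choice of reward function $Rew()$ and environment function $Env()$, the problem ESCreate (with $Rew()$ and $Env()$ fixed to these choices) is unsolvable: there is no algorithm (Turing machine), regardless of running time or memory, that produces the correct output for every instance.
   Context: Model. Let $X=\{x_1,\dots,x_{|X|}\}$ be Boolean variables and $O$ a finite output set. Software system requirements are a finite set $R$ of pairs $(i,o)$, where $i$ is a truth assignment to $X$ and $o\in O$. Interfaces and components follow the Dana runtime component model: an interface is a set of function prototypes (function name, return type, parameter types) together with a set of typed transfer fields; a component provides one or more interfaces and requires zero or more interfaces, and contains code (in a Dana-like imperative language with assignments, conditionals, loops, arrays, function calls and an output statement; this language can simulate any Turing machine) implementing every function of its provided interfaces; this code may call functions and use transfer fields of its required interfaces. $L_{int}$ and $L_{comp}$ are finite libraries of interfaces and components. Given a base component $c\in L_{comp}$ implementing a function main, a valid component-based software system $S$ based on $c$ (relative to $L_{int},L_{comp}$) is obtained by choosing, for each required interface of $c$, a component of $L_{comp}$ providing it, and recursively for each required interface of every chosen component; separate copies of a component are used for separate required-interface occurrences, and when a component providing several interfaces implements one of them, only a reduced copy containing that interface's code is used. Its component wiring tree has root $c$, vertices the chosen component copies, and arcs (wirings) labelled by the implemented interfaces; no component label may occur twice on a root-to-leaf path. $S$ is working relative to $R$ if for every $(i,o)\in R$, running $S$ on input $i$ outputs $o$. A reward function $Rew()$ maps a system to a positive integer (smaller is better) and an environment function $Env()$ maps a system to a collection of events and metric values; both are computable in time polynomial in the size of the system and $Rew()$ only chooses among working systems. Problem ESCreate: Input: $R$, $L_{int}$, $L_{comp}$,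 base component $c\in L_{comp}$, and $Rew()$, $Env()$. Output: a working system $S$ based on $c$ relative to $L_{int},L_{comp},R$ with the smallest value of $Rew(S)$ among all such working systems, if one exists, and the special symbol $\bot$ otherwise. *)

theory Defs
  imports Main
begin

text \<open>All identifiers (variables, arrays, functions, interfaces, components,
 transfer fields) are natural numbers.  Types are nominal labels.\<close>

type_synonym name = nat
type_synonym ty = nat

definition main_fn :: name where "main_fn = 0"

section \<open>The Dana-like imperative language\<close>

text \<open>Values are natural numbers; booleans are 0 (false) / nonzero (true).\<close>

datatype expr =
    N nat
  | V name
  | Plus expr expr
  | Sub expr expr
  | Less expr expr
  | Eq expr expr
  | And expr expr
  | Not expr
  | ArrRead name expr
  | InLen
  | In expr
  | FieldOwn name
  | FieldReq name name

datatype com =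
    Skip
  | Assign name expr
  | ArrWrite name expr expr
  | Seq com com
  | If expr com com
  | While expr com
  | Out expr
  | Return expr
  | CallR name name name "expr list"   (* x := I.f(args), I a required interface *)
  | CallL name name "expr list"        (* x := f(args), local function *)
  | SetFieldOwn name expr
  | SetFieldReq name name expr

record iface =
  iname :: name
  ifuns :: "(name \<times> ty \<times> ty list) list"     (* function name, return type, parameter types *)
  ifields :: "(name \<times> ty) list"              (* transfer fields *)

record comp =
  cname :: name
  cprov :: "name list"
  creq :: "name list"
  ccode :: "(name \<times> name \<times> name list \<times> com) list"
     (* (implemented interface, function name, parameters, body) *)

text \<open>Component wiring trees: a vertex carries a (copy of a) component and its
 wirings, each labelled by the implemented (required) interface.\<close>
datatype systree = SNode comp "(name \<times> systree) list"

fun root_comp :: "systree \<Rightarrow> comp" where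
  "root_comp (SNode d ws) = d"

fun expr_refs :: "expr \<Rightarrow> name set" where
  "expr_refs (Plus a b) = expr_refs a \<union> expr_refs b"
| "expr_refs (Sub a b) = expr_refs a \<union> expr_refs b"
| "expr_refs (Less a b) = expr_refs a \<union> expr_refs b"
| "expr_refs (Eq a b) = expr_refs a \<union> expr_refs b"
| "expr_refs (And a b) = expr_refs a \<union> expr_refs b"
| "expr_refs (Not a) = expr_refs a"
| "expr_refs (ArrRead _ a) = expr_refs a"
| "expr_refs (In a) = expr_refs a"
| "expr_refs (FieldReq I _) = {I}"
| "expr_refs _ = {}"

fun com_refs :: "com \<Rightarrow> name set" where
  "com_refs (Assign _ e) = expr_refs e"
| "com_refs (ArrWrite _ i e) = expr_refs i \<union> expr_refs e"
| "com_refs (Seq c1 c2) = com_refs c1 \<union> com_refs c2"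
| "com_refs (If b c1 c2) = expr_refs b \<union> com_refs c1 \<union> com_refs c2"
| "com_refs (While b c) = expr_refs b \<union> com_refs c"
| "com_refs (Out e) = expr_refs e"
| "com_refs (Return e) = expr_refs e"
| "com_refs (CallR _ I _ args) = insert I (\<Union>e\<in>set args. expr_refs e)"
| "com_refs (CallL _ _ args) = (\<Union>e\<in>set args. expr_refs e)"
| "com_refs (SetFieldOwn _ e) = expr_refs e"
| "com_refs (SetFieldReq I _ e) = insert I (expr_refs e)"
| "com_refs Skip = {}"

definition wf_iface :: "iface \<Rightarrow> bool" where
  "wf_iface ifc \<longleftrightarrow> distinct (map fst (ifuns ifc)) \<and> distinct (map fst (ifields ifc))"

definition wf_lint :: "iface list \<Rightarrow> bool" where
  "wf_lint Lint \<longleftrightarrow> distinct (map iname Lint) \<and> (\<forall>ifc\<in>set Lint. wf_iface ifc)"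

definition wf_comp :: "iface list \<Rightarrow> comp \<Rightarrow> bool" where
  "wf_comp Lint d \<longleftrightarrow>
     cprov d \<noteq> [] \<and> distinct (cprov d) \<and> distinct (creq d) \<and>
     set (cprov d) \<subseteq> iname ` set Lint \<and> set (creq d) \<subseteq> iname ` set Lint \<and>
     (\<forall>(J, g, ps, b) \<in> set (ccode d).
        J \<in> set (cprov d) \<and> distinct ps \<and> com_refs b \<subseteq> set (creq d)) \<and>
     (\<forall>ifc\<in>set Lint. iname ifc \<in> set (cprov d) \<longrightarrow>
        (\<forall>(g, rt, pts) \<in> set (ifuns ifc).
           \<exists>!e. e \<in> set (ccode d) \<and> fst e = iname ifc \<and> fst (snd e) = g \<and>
                  length (fst (snd (snd e))) = length pts))"

text \<open>valid_sys L A T: T is a valid wiring tree over component library L,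
 where A is the set of component labels on the path above T's root.\<close>
inductive valid_sys :: "comp list \<Rightarrow> name set \<Rightarrow> systree \<Rightarrow> bool" where
  "\<lbrakk> d \<in> set L; cname d \<notin> A; map fst ws = creq d;
     \<forall>I t. (I, t) \<in> set ws \<longrightarrow>
        I \<in> set (cprov (root_comp t)) \<and> valid_sys L (insert (cname d) A) t \<rbrakk>
   \<Longrightarrow> valid_sys L A (SNode d ws)"

section \<open>Operational semantics (small-step, with step counting)\<close>

record frame =
  fpath :: "name list"         (* position of the executing component copy in the tree *)
  fcont :: "com list"          (* continuation *)
  fvars :: "name \<Rightarrow> nat"
  farrs :: "name \<Rightarrow> nat \<Rightarrow> nat"
  fret :: name                 (* caller variable receiving the return value *)

record config =
  stack :: "frame list"
  flds :: "name list \<times> name \<Rightarrow> nat"   (* transfer fields, per wiring *)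
  outs :: "nat list"

fun node_at :: "systree \<Rightarrow> name list \<Rightarrow> systree option" where
  "node_at T [] = Some T"
| "node_at (SNode d ws) (I # p) =
     (case map_of ws I of None \<Rightarrow> None | Some t \<Rightarrow> node_at t p)"

text \<open>Code available at a vertex: the full code at the root, and only the
 code of the implemented interface (reduced copy) elsewhere.\<close>
definition code_at :: "systree \<Rightarrow> name list \<Rightarrow> (name \<times> name \<times> name list \<times> com) list" where
  "code_at T p = (case node_at T p of None \<Rightarrow> []
     | Some t \<Rightarrow> (if p = [] then ccode (root_comp t)
                  else filter (\<lambda>e. fst e = last p) (ccode (root_comp t))))"

fun aval :: "nat list \<Rightarrow> (name list \<times> name \<Rightarrow> nat) \<Rightarrow> frame \<Rightarrow> expr \<Rightarrow> nat" where
  "aval inp fs fr (N n) = n"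
| "aval inp fs fr (V x) = fvars fr x"
| "aval inp fs fr (Plus a b) = aval inp fs fr a + aval inp fs fr b"
| "aval inp fs fr (Sub a b) = aval inp fs fr a - aval inp fs fr b"
| "aval inp fs fr (Less a b) = (if aval inp fs fr a < aval inp fs fr b then 1 else 0)"
| "aval inp fs fr (Eq a b) = (if aval inp fs fr a = aval inp fs fr b then 1 else 0)"
| "aval inp fs fr (And a b) = (if aval inp fs fr a \<noteq> 0 \<and> aval inp fs fr b \<noteq> 0 then 1 else 0)"
| "aval inp fs fr (Not a) = (if aval inp fs fr a = 0 then 1 else 0)"
| "aval inp fs fr (ArrRead x a) = farrs fr x (aval inp fs fr a)"
| "aval inp fs fr InLen = length inp"
| "aval inp fs fr (In a) = (let i = aval inp fs fr a in if i < length inp then inp ! i else 0)"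
| "aval inp fs fr (FieldOwn f) = fs (fpath fr, f)"
| "aval inp fs fr (FieldReq I f) = fs (fpath fr @ [I], f)"

definition bind_params :: "name list \<Rightarrow> nat list \<Rightarrow> name \<Rightarrow> nat" where
  "bind_params ps vs = fold (\<lambda>(x, v) m. m(x := v)) (zip ps vs) (\<lambda>_. 0)"

definition do_return :: "nat \<Rightarrow> config \<Rightarrow> config" where
  "do_return v cfg = (case stack cfg of [] \<Rightarrow> cfg
     | fr # [] \<Rightarrow> cfg\<lparr>stack := []\<rparr>
     | fr # cr # frs \<Rightarrow> cfg\<lparr>stack := cr\<lparr>fvars := (fvars cr)(fret fr := v)\<rparr> # frs\<rparr>)"

definition do_call :: "systree \<Rightarrow> name list \<Rightarrow> name \<Rightarrow> name \<Rightarrow> nat list \<Rightarrow>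
     frame \<Rightarrow> frame list \<Rightarrow> config \<Rightarrow> config option" where
  "do_call T q x f vs fr frs cfg =
     (case find (\<lambda>e. fst (snd e) = f \<and> length (fst (snd (snd e))) = length vs) (code_at T q) of
        None \<Rightarrow> None
      | Some (J, g, ps, body) \<Rightarrow>
          Some (cfg\<lparr>stack := \<lparr>fpath = q, fcont = [body], fvars = bind_params ps vs,
                               farrs = (\<lambda>_ _. 0), fret = x\<rparr> # fr # frs\<rparr>))"

fun step :: "systree \<Rightarrow> nat list \<Rightarrow> config \<Rightarrow> config option" where
  "step T inp cfg = (case stack cfg of
     [] \<Rightarrow> None
   | fr # frs \<Rightarrow> (case fcont fr of
       [] \<Rightarrow> Some (do_return 0 cfg)
     | c # cs \<Rightarrow>
        (let fs = flds cfg; ev = aval inp fs fr; fr' = fr\<lparr>fcont := cs\<rparr> in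
         case c of
           Skip \<Rightarrow> Some (cfg\<lparr>stack := fr' # frs\<rparr>)
         | Assign x e \<Rightarrow> Some (cfg\<lparr>stack := fr'\<lparr>fvars := (fvars fr)(x := ev e)\<rparr> # frs\<rparr>)
         | ArrWrite a i e \<Rightarrow>
             Some (cfg\<lparr>stack := fr'\<lparr>farrs := (farrs fr)(a := (farrs fr a)(ev i := ev e))\<rparr> # frs\<rparr>)
         | Seq c1 c2 \<Rightarrow> Some (cfg\<lparr>stack := fr\<lparr>fcont := c1 # c2 # cs\<rparr> # frs\<rparr>)
         | If b c1 c2 \<Rightarrow>
             Some (cfg\<lparr>stack := fr\<lparr>fcont := (if ev b \<noteq> 0 then c1 else c2) # cs\<rparr> # frs\<rparr>)
         | While b c1 \<Rightarrow>
             Some (cfg\<lparr>stack := fr\<lparr>fcont := (if ev b \<noteq> 0 then c1 # c # cs else cs)\<rparr> # frs\<rparr>)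
         | Out e \<Rightarrow> Some (cfg\<lparr>stack := fr' # frs, outs := outs cfg @ [ev e]\<rparr>)
         | Return e \<Rightarrow> Some (do_return (ev e) cfg)
         | CallR x I f args \<Rightarrow>
             (if node_at T (fpath fr @ [I]) = None then None
              else do_call T (fpath fr @ [I]) x f (map ev args) fr' frs cfg)
         | CallL x f args \<Rightarrow> do_call T (fpath fr) x f (map ev args) fr' frs cfg
         | SetFieldOwn f e \<Rightarrow> Some (cfg\<lparr>stack := fr' # frs, flds := fs((fpath fr, f) := ev e)\<rparr>)
         | SetFieldReq I f e \<Rightarrow>
             Some (cfg\<lparr>stack := fr' # frs, flds := fs((fpath fr @ [I], f) := ev e)\<rparr>))))"

fun steps :: "systree \<Rightarrow> nat list \<Rightarrow> nat \<Rightarrow> config \<Rightarrow> config option" where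
  "steps T inp 0 cfg = Some cfg"
| "steps T inp (Suc k) cfg = (case step T inp cfg of None \<Rightarrow> None | Some cfg' \<Rightarrow> steps T inp k cfg')"

definition init_config :: "com \<Rightarrow> config" where
  "init_config body = \<lparr>stack = [\<lparr>fpath = [], fcont = [body], fvars = (\<lambda>_. 0),
                                  farrs = (\<lambda>_ _. 0), fret = 0\<rparr>],
                       flds = (\<lambda>_. 0), outs = []\<rparr>"

text \<open>Run body in tree T on input inp: Some outputs if execution halts after
 exactly k steps.\<close>
definition run_in :: "systree \<Rightarrow> com \<Rightarrow> nat list \<Rightarrow> nat \<Rightarrow> nat list option" where
  "run_in T body inp k = (case steps T inp k (init_config body) of
       Some cfg \<Rightarrow> (if stack cfg = [] then Some (outs cfg) else None)
     | None \<Rightarrow> None)"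

definition run_sys :: "systree \<Rightarrow> nat list \<Rightarrow> nat \<Rightarrow> nat list option" where
  "run_sys S inp k = (case find (\<lambda>e. fst (snd e) = main_fn \<and> fst (snd (snd e)) = [])
                               (ccode (root_comp S)) of
       None \<Rightarrow> None
     | Some (J, g, ps, body) \<Rightarrow> run_in S body inp k)"

text \<open>Algorithms (Turing-complete model of computation): a program of the same
 language, run stand-alone (no components wired) on a natural-number list input;
 its result is the list of values it outputs.\<close>
definition empty_comp :: comp where
  "empty_comp = \<lparr>cname = 0, cprov = [], creq = [], ccode = []\<rparr>"

definition run_prog :: "com \<Rightarrow> nat list \<Rightarrow> nat \<Rightarrow> nat list option" where
  "run_prog P inp k = run_in (SNode empty_comp []) P inp k"

datatype sx = A nat | L "sx list"

fun sx_enc :: "sx \<Rightarrow> nat list" where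
  "sx_enc (A n) = [0, n]"
| "sx_enc (L xs) = 1 # length xs # concat (map sx_enc xs)"

definition natl :: "nat list \<Rightarrow> sx" where "natl xs = L (map A xs)"

fun expr_sx :: "expr \<Rightarrow> sx" where
  "expr_sx (N n) = L [A 0, A n]"
| "expr_sx (V x) = L [A 1, A x]"
| "expr_sx (Plus a b) = L [A 2, expr_sx a, expr_sx b]"
| "expr_sx (Sub a b) = L [A 3, expr_sx a, expr_sx b]"
| "expr_sx (Less a b) = L [A 4, expr_sx a, expr_sx b]"
| "expr_sx (Eq a b) = L [A 5, expr_sx a, expr_sx b]"
| "expr_sx (And a b) = L [A 6, expr_sx a, expr_sx b]"
| "expr_sx (Not a) = L [A 7, expr_sx a]"
| "expr_sx (ArrRead x a) = L [A 8, A x, expr_sx a]"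
| "expr_sx InLen = L [A 9]"
| "expr_sx (In a) = L [A 10, expr_sx a]"
| "expr_sx (FieldOwn f) = L [A 11, A f]"
| "expr_sx (FieldReq I f) = L [A 12, A I, A f]"

fun com_sx :: "com \<Rightarrow> sx" where
  "com_sx Skip = L [A 0]"
| "com_sx (Assign x e) = L [A 1, A x, expr_sx e]"
| "com_sx (ArrWrite a i e) = L [A 2, A a, expr_sx i, expr_sx e]"
| "com_sx (Seq c1 c2) = L [A 3, com_sx c1, com_sx c2]"
| "com_sx (If b c1 c2) = L [A 4, expr_sx b, com_sx c1, com_sx c2]"
| "com_sx (While b c) = L [A 5, expr_sx b, com_sx c]"
| "com_sx (Out e) = L [A 6, expr_sx e]"
| "com_sx (Return e) = L [A 7, expr_sx e]"
| "com_sx (CallR x I f args) = L [A 8, A x, A I, A f, L (map expr_sx args)]"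
| "com_sx (CallL x f args) = L [A 9, A x, A f, L (map expr_sx args)]"
| "com_sx (SetFieldOwn f e) = L [A 10, A f, expr_sx e]"
| "com_sx (SetFieldReq I f e) = L [A 11, A I, A f, expr_sx e]"

definition iface_sx :: "iface \<Rightarrow> sx" where
  "iface_sx ifc = L [A (iname ifc),
     L (map (\<lambda>(g, rt, pts). L [A g, A rt, natl pts]) (ifuns ifc)),
     L (map (\<lambda>(f, t). L [A f, A t]) (ifields ifc))]"

definition comp_sx :: "comp \<Rightarrow> sx" where
  "comp_sx d = L [A (cname d), natl (cprov d), natl (creq d),
     L (map (\<lambda>(J, g, ps, b). L [A J, A g, natl ps, com_sx b]) (ccode d))]"

fun tree_sx :: "systree \<Rightarrow> sx" where
  "tree_sx (SNode d ws) = L [comp_sx d, L (map (\<lambda>(I, t). L [A I, tree_sx t]) ws)]"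

definition enc_sys :: "systree \<Rightarrow> nat list" where
  "enc_sys S = sx_enc (tree_sx S)"

section \<open>The problem ESCreate\<close>

text \<open>An instance: number of Boolean variables |X|, requirements R (truth
 assignment as a Boolean list of length |X|, expected output), interface
 library, component library, base component.\<close>
record esc_inst =
  nvars :: nat
  reqs :: "(bool list \<times> nat) list"
  lint :: "iface list"
  lcomp :: "comp list"
  base :: comp

definition valid_instance :: "esc_inst \<Rightarrow> bool" where
  "valid_instance I \<longleftrightarrow>
     (\<forall>(i, out) \<in> set (reqs I). length i = nvars I) \<and>
     wf_lint (lint I) \<and>
     distinct (map cname (lcomp I)) \<and>
     (\<forall>d\<in>set (lcomp I). wf_comp (lint I) d) \<and>
     base I \<in> set (lcomp I) \<and>
     (\<exists>J b. (J, main_fn, [], b) \<in> set (ccode (base I)))"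

definition enc_inst :: "esc_inst \<Rightarrow> nat list" where
  "enc_inst I = sx_enc (L [A (nvars I),
      L (map (\<lambda>(i, out). L [natl (map (\<lambda>b. if b then 1 else 0) i), A out]) (reqs I)),
      L (map iface_sx (lint I)),
      L (map comp_sx (lcomp I)),
      comp_sx (base I)])"

text \<open>Input assignment i is passed as the 0/1 list, x_k being entry k-1.\<close>
definition sys_input :: "bool list \<Rightarrow> nat list" where
  "sys_input i = map (\<lambda>b. if b then 1 else 0) i"

definition sys_outputs :: "systree \<Rightarrow> bool list \<Rightarrow> nat \<Rightarrow> bool" where
  "sys_outputs S i out \<longleftrightarrow> (\<exists>k. run_sys S (sys_input i) k = Some [out])"

definition working :: "esc_inst \<Rightarrow> systree \<Rightarrow> bool" where
  "working I S \<longleftrightarrow> valid_sys (lcomp I) {} S \<and> root_comp S = base I \<and>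
     (\<forall>(i, out) \<in> set (reqs I). sys_outputs S i out)"

text \<open>Correct answers of ESCreate (None is the symbol bottom).\<close>
definition esc_correct :: "(systree \<Rightarrow> nat) \<Rightarrow> (systree \<Rightarrow> nat list) \<Rightarrow>
    esc_inst \<Rightarrow> systree option \<Rightarrow> bool" where
  "esc_correct Rew Env I ans = (case ans of
     None \<Rightarrow> \<not> (\<exists>S. working I S)
   | Some S \<Rightarrow> working I S \<and> (\<forall>S'. working I S' \<longrightarrow> Rew S \<le> Rew S'))"

definition enc_ans :: "systree option \<Rightarrow> nat list" where
  "enc_ans ans = (case ans of None \<Rightarrow> sx_enc (L []) | Some S \<Rightarrow> sx_enc (L [tree_sx S]))"

definition poly_time_sys :: "(systree \<Rightarrow> nat list) \<Rightarrow> bool" where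
  "poly_time_sys F \<longleftrightarrow> (\<exists>P a d. \<forall>S. \<exists>k. k \<le> a * (length (enc_sys S) + 1) ^ d \<and>
                                        run_prog P (enc_sys S) k = Some (F S))"

definition solves_ESCreate :: "(systree \<Rightarrow> nat) \<Rightarrow> (systree \<Rightarrow> nat list) \<Rightarrow> com \<Rightarrow> bool" where
  "solves_ESCreate Rew Env P \<longleftrightarrow>
     (\<forall>I. valid_instance I \<longrightarrow>
        (\<exists>k ans. esc_correct Rew Env I ans \<and> run_prog P (enc_inst I) k = Some (enc_ans ans)))"

end

theory Submission
  imports Defs "HOL-Library.Nat_Bijection" "HOL-Library.More_List"
begin

text \<open>Diagonalisation.  From a program P that supposedly solves ESCreate we build an instance
  with a single component and a single requirement (on the empty assignment, output 0), so that
  the only candidate system is that component alone.  Its main function first writes down the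
  encoding of the whole instance, in the manner of a self-reproducing program: its code stores a
  description D of the rest of the code, so its own encoding is obtained by printing D once as
  stored data and once as code.  It then runs P on this encoding and outputs 0 if P answers None,
  looping forever otherwise.  So the system is working iff P answers None, and P's answer is
  wrong.\<close>

section \<open>Runs, halting and divergence\<close>

lemma steps_add:
  "steps T inp (m + n) c = (case steps T inp m c of None \<Rightarrow> None | Some c' \<Rightarrow> steps T inp n c')"
  by (induction m arbitrary: c) (auto split: option.splits)

definition reaches :: "systree \<Rightarrow> nat list \<Rightarrow> config \<Rightarrow> config \<Rightarrow> bool" where
  "reaches T inp c c' \<longleftrightarrow> (\<exists>n. steps T inp n c = Some c')"

lemma reaches_refl: "reaches T inp c c"
  unfolding reaches_def by (metis steps.simps(1))

lemma reaches_trans [trans]: "reaches T inp c c' \<Longrightarrow> reaches T inp c' c'' \<Longrightarrow> reaches T inp c c''"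
  unfolding reaches_def by (metis option.simps(5) steps_add)

lemma reaches_step: "step T inp c = Some c' \<Longrightarrow> reaches T inp c c'"
  unfolding reaches_def by (metis option.simps(5) steps.simps)

definition diverges :: "systree \<Rightarrow> nat list \<Rightarrow> config \<Rightarrow> bool" where
  "diverges T inp c \<longleftrightarrow> (\<forall>n. \<exists>c'. steps T inp n c = Some c' \<and> stack c' \<noteq> [])"

lemma steps_before_halt:
  assumes "steps T inp n c = Some c'" and "j < n"
  shows "\<exists>c''. steps T inp j c = Some c'' \<and> stack c'' \<noteq> []"
proof -
  obtain d where "n = j + Suc d"
    using assms(2) by (metis add_Suc_right less_iff_Suc_add)
  then have run_split:
      "Some c' = (case steps T inp j c of None \<Rightarrow> None | Some c'' \<Rightarrow> steps T inp (Suc d) c'')"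
    using assms(1) steps_add by metis
  then obtain c'' where c'': "steps T inp j c = Some c''"
    by (cases "steps T inp j c") auto
  moreover have "stack c'' \<noteq> []"
  proof
    assume "stack c'' = []"
    then have "steps T inp (Suc d) c'' = None" by simp
    with run_split c'' show False by simp
  qed
  ultimately show ?thesis by blast
qed

lemma diverges_if_reaches:
  assumes "reaches T inp c c'" and "diverges T inp c'"
  shows "diverges T inp c"
  unfolding diverges_def
proof
  fix j
  obtain n where n: "steps T inp n c = Some c'"
    using assms(1) by (auto simp: reaches_def)
  show "\<exists>c''. steps T inp j c = Some c'' \<and> stack c'' \<noteq> []"
  proof (cases "j < n")
    case True
    with n show ?thesis by (rule steps_before_halt)
  next
    case False
    then have "steps T inp j c = steps T inp (j - n) c'"
      using n steps_add[of T inp n "j - n" c] by (simp del: steps.simps)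
    with assms(2) show ?thesis by (simp add: diverges_def)
  qed
qed

lemma diverges_if_cycle:
  assumes "steps T inp (Suc n) c = Some c"
  shows "diverges T inp c"
  unfolding diverges_def
proof
  fix j
  have "steps T inp (m * Suc n) c = Some c" for m
  proof (induction m)
    case (Suc m)
    have "steps T inp (Suc n + m * Suc n) c = Some c"
      using Suc steps_add[of T inp "Suc n" "m * Suc n" c] assms by (simp del: steps.simps)
    then show ?case by (simp only: mult_Suc)
  qed simp
  moreover have "j < Suc j * Suc n" by simp
  ultimately show "\<exists>c'. steps T inp j c = Some c' \<and> stack c' \<noteq> []"
    by (rule steps_before_halt)
qed

lemma run_in_diverges: "diverges T inp (init_config body) \<Longrightarrow> run_in T body inp k = None"
  unfolding run_in_def diverges_def by (auto split: option.split dest: spec[of _ k])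

lemma run_in_reaches_halt:
  assumes "reaches T inp (init_config body) c" and "stack c = []"
  shows "\<exists>k. run_in T body inp k = Some (outs c)"
proof -
  obtain k where "steps T inp k (init_config body) = Some c"
    using assms(1) by (auto simp: reaches_def)
  with assms(2) have "run_in T body inp k = Some (outs c)" by (simp add: run_in_def)
  then show ?thesis ..
qed

section \<open>Big-step semantics within a single frame\<close>

lemma aval_fcont [simp]: "aval inp fs (fr\<lparr>fcont := cs\<rparr>) e = aval inp fs fr e"
  by (induction e) (auto simp: Let_def)

inductive big_step :: "nat list \<Rightarrow> (name list \<times> name \<Rightarrow> nat) \<Rightarrow> com \<Rightarrow> frame \<Rightarrow> frame \<Rightarrow> bool"
  for inp fs where
  BSkip: "big_step inp fs Skip fr fr"
| BAssign: "big_step inp fs (Assign x e) fr (fr\<lparr>fvars := (fvars fr)(x := aval inp fs fr e)\<rparr>)"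
| BArrWrite: "big_step inp fs (ArrWrite a i e) fr
    (fr\<lparr>farrs := (farrs fr)(a := (farrs fr a)(aval inp fs fr i := aval inp fs fr e))\<rparr>)"
| BSeq: "big_step inp fs c1 fr fr1 \<Longrightarrow> big_step inp fs c2 fr1 fr2 \<Longrightarrow>
    big_step inp fs (Seq c1 c2) fr fr2"
| BIfTrue: "aval inp fs fr b \<noteq> 0 \<Longrightarrow> big_step inp fs c1 fr fr' \<Longrightarrow> big_step inp fs (If b c1 c2) fr fr'"
| BIfFalse: "aval inp fs fr b = 0 \<Longrightarrow> big_step inp fs c2 fr fr' \<Longrightarrow> big_step inp fs (If b c1 c2) fr fr'"
| BWhileFalse: "aval inp fs fr b = 0 \<Longrightarrow> big_step inp fs (While b c) fr fr"
| BWhileTrue: "aval inp fs fr b \<noteq> 0 \<Longrightarrow> big_step inp fs c fr fr1 \<Longrightarrow>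
    big_step inp fs (While b c) fr1 fr2 \<Longrightarrow> big_step inp fs (While b c) fr fr2"

lemma big_step_reaches:
  assumes "big_step inp fs c fr fr'" and "stack cfg = fr\<lparr>fcont := c # cs\<rparr> # frs" and "flds cfg = fs"
  shows "reaches T inp cfg (cfg\<lparr>stack := fr'\<lparr>fcont := cs\<rparr> # frs\<rparr>)"
  using assms
proof (induction arbitrary: cfg cs rule: big_step.induct)
  case (BSeq c1 fr fr1 c2 fr2)
  have "reaches T inp cfg (cfg\<lparr>stack := fr\<lparr>fcont := c1 # c2 # cs\<rparr> # frs\<rparr>)"
    using BSeq.prems by (intro reaches_step) simp
  also have "reaches T inp \<dots> (cfg\<lparr>stack := fr1\<lparr>fcont := c2 # cs\<rparr> # frs\<rparr>)"
    using BSeq.IH(1)[of "cfg\<lparr>stack := fr\<lparr>fcont := c1 # c2 # cs\<rparr> # frs\<rparr>"] BSeq.prems by simp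
  also have "reaches T inp \<dots> (cfg\<lparr>stack := fr2\<lparr>fcont := cs\<rparr> # frs\<rparr>)"
    using BSeq.IH(2)[of "cfg\<lparr>stack := fr1\<lparr>fcont := c2 # cs\<rparr> # frs\<rparr>"] BSeq.prems by simp
  finally show ?case .
next
  case (BIfTrue fr b c1 fr' c2)
  have "reaches T inp cfg (cfg\<lparr>stack := fr\<lparr>fcont := c1 # cs\<rparr> # frs\<rparr>)"
    using BIfTrue.prems BIfTrue.hyps(1) by (intro reaches_step) simp
  also have "reaches T inp \<dots> (cfg\<lparr>stack := fr'\<lparr>fcont := cs\<rparr> # frs\<rparr>)"
    using BIfTrue.IH[of "cfg\<lparr>stack := fr\<lparr>fcont := c1 # cs\<rparr> # frs\<rparr>"] BIfTrue.prems by simp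
  finally show ?case .
next
  case (BIfFalse fr b c2 fr' c1)
  have "reaches T inp cfg (cfg\<lparr>stack := fr\<lparr>fcont := c2 # cs\<rparr> # frs\<rparr>)"
    using BIfFalse.prems BIfFalse.hyps(1) by (intro reaches_step) simp
  also have "reaches T inp \<dots> (cfg\<lparr>stack := fr'\<lparr>fcont := cs\<rparr> # frs\<rparr>)"
    using BIfFalse.IH[of "cfg\<lparr>stack := fr\<lparr>fcont := c2 # cs\<rparr> # frs\<rparr>"] BIfFalse.prems by simp
  finally show ?case .
next
  case (BWhileTrue fr b c fr1 fr2)
  have "reaches T inp cfg (cfg\<lparr>stack := fr\<lparr>fcont := c # While b c # cs\<rparr> # frs\<rparr>)"
    using BWhileTrue.prems BWhileTrue.hyps(1) by (intro reaches_step) simp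
  also have "reaches T inp \<dots> (cfg\<lparr>stack := fr1\<lparr>fcont := While b c # cs\<rparr> # frs\<rparr>)"
    using BWhileTrue.IH(1)[of "cfg\<lparr>stack := fr\<lparr>fcont := c # While b c # cs\<rparr> # frs\<rparr>"]
      BWhileTrue.prems by simp
  also have "reaches T inp \<dots> (cfg\<lparr>stack := fr2\<lparr>fcont := cs\<rparr> # frs\<rparr>)"
    using BWhileTrue.IH(2)[of "cfg\<lparr>stack := fr1\<lparr>fcont := While b c # cs\<rparr> # frs\<rparr>"] BWhileTrue.prems
    by simp
  finally show ?case .
qed (auto intro!: reaches_step simp: Let_def)

section \<open>Running an algorithm inside a component\<close>

definition bot_step :: "nat \<Rightarrow> nat \<Rightarrow> nat" where
  "bot_step s v = (if s = 0 \<and> v = 1 then 1 else if s = 1 \<and> v = 0 then 2 else 3)"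

definition bot_state :: "nat list \<Rightarrow> nat" where
  "bot_state vs = foldl bot_step 0 vs"

lemma bot_state_snoc: "bot_state (vs @ [v]) = bot_step (bot_state vs) v"
  by (simp add: bot_state_def)

lemma foldl_bot_step_3: "foldl bot_step 3 vs = 3"
  by (induction vs) (auto simp: bot_step_def)

lemma bot_state_eq_2_iff: "bot_state vs = 2 \<longleftrightarrow> vs = [1, 0]"
  by (cases vs rule: remdups_adj.cases; cases "drop 2 vs")
    (auto simp: bot_state_def bot_step_def foldl_bot_step_3)

definition bot_step_expr :: "nat \<Rightarrow> expr \<Rightarrow> expr" where
  "bot_step_expr k e =
     (let to1 = And (Eq (V (k+4)) (N 0)) (Eq e (N 1));
          to2 = And (Eq (V (k+4)) (N 1)) (Eq e (N 0))
      in Sub (Sub (N 3) (Plus to1 to1)) to2)"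

lemma aval_bot_step_expr:
  "aval inp fs fr (bot_step_expr k e) = bot_step (fvars fr (k+4)) (aval inp fs fr e)"
  by (simp add: bot_step_expr_def bot_step_def Let_def)

definition loop_forever :: com where
  "loop_forever = While (N 1) Skip"

definition finish :: "nat \<Rightarrow> com" where
  "finish k = If (Eq (V (k+4)) (N 2)) (Seq (Out (N 0)) (Return (N 0))) loop_forever"

fun max_name_expr :: "expr \<Rightarrow> nat" where
  "max_name_expr (V x) = x"
| "max_name_expr (Plus a b) = max (max_name_expr a) (max_name_expr b)"
| "max_name_expr (Sub a b) = max (max_name_expr a) (max_name_expr b)"
| "max_name_expr (Less a b) = max (max_name_expr a) (max_name_expr b)"
| "max_name_expr (Eq a b) = max (max_name_expr a) (max_name_expr b)"
| "max_name_expr (And a b) = max (max_name_expr a) (max_name_expr b)"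
| "max_name_expr (Not a) = max_name_expr a"
| "max_name_expr (ArrRead x a) = max x (max_name_expr a)"
| "max_name_expr (In a) = max_name_expr a"
| "max_name_expr _ = 0"

fun max_name_com :: "com \<Rightarrow> nat" where
  "max_name_com (Assign x e) = max x (max_name_expr e)"
| "max_name_com (ArrWrite a i e) = max a (max (max_name_expr i) (max_name_expr e))"
| "max_name_com (Seq c1 c2) = max (max_name_com c1) (max_name_com c2)"
| "max_name_com (If b c1 c2) = max (max_name_expr b) (max (max_name_com c1) (max_name_com c2))"
| "max_name_com (While b c) = max (max_name_expr b) (max_name_com c)"
| "max_name_com (Out e) = max_name_expr e"
| "max_name_com (Return e) = max_name_expr e"
| "max_name_com (SetFieldOwn f e) = max_name_expr e"
| "max_name_com (SetFieldReq I f e) = max_name_expr e"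
| "max_name_com _ = 0"

text \<open>Code generated for a program P whose names are all below k uses the names from k on as
  scratch space.  Array k holds the self-description D, with its length in variable k; array
  k+1 is a buffer, with its length in variable k+1, in which the input of P is built and from
  which P then reads it; variable k+2 is a loop counter and variable k+3 the length of the input;
  arrays k+2 and k+3 hold P's own and required transfer fields (the latter indexed by
  prod_encode); variable k+4 holds bot_state of P's outputs so far, which is 2 exactly when they
  are [1, 0], the encoding of the answer None.  Calls are dropped: in a stand-alone run they get
  stuck.\<close>

fun embed_expr :: "nat \<Rightarrow> expr \<Rightarrow> expr" where
  "embed_expr k (Plus a b) = Plus (embed_expr k a) (embed_expr k b)"
| "embed_expr k (Sub a b) = Sub (embed_expr k a) (embed_expr k b)"
| "embed_expr k (Less a b) = Less (embed_expr k a) (embed_expr k b)"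
| "embed_expr k (Eq a b) = Eq (embed_expr k a) (embed_expr k b)"
| "embed_expr k (And a b) = And (embed_expr k a) (embed_expr k b)"
| "embed_expr k (Not a) = Not (embed_expr k a)"
| "embed_expr k (ArrRead x a) = ArrRead x (embed_expr k a)"
| "embed_expr k InLen = V (k+3)"
| "embed_expr k (In a) = ArrRead (k+1) (embed_expr k a)"
| "embed_expr k (FieldOwn f) = ArrRead (k+2) (N f)"
| "embed_expr k (FieldReq I f) = ArrRead (k+3) (N (prod_encode (I, f)))"
| "embed_expr k e = e"

fun embed_com :: "nat \<Rightarrow> com \<Rightarrow> com" where
  "embed_com k (Assign x e) = Assign x (embed_expr k e)"
| "embed_com k (ArrWrite a i e) = ArrWrite a (embed_expr k i) (embed_expr k e)"
| "embed_com k (Seq c1 c2) = Seq (embed_com k c1) (embed_com k c2)"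
| "embed_com k (If b c1 c2) = If (embed_expr k b) (embed_com k c1) (embed_com k c2)"
| "embed_com k (While b c) = While (embed_expr k b) (embed_com k c)"
| "embed_com k (Out e) = Assign (k+4) (bot_step_expr k (embed_expr k e))"
| "embed_com k (Return e) = finish k"
| "embed_com k (SetFieldOwn f e) = ArrWrite (k+2) (N f) (embed_expr k e)"
| "embed_com k (SetFieldReq I f e) = ArrWrite (k+3) (N (prod_encode (I, f))) (embed_expr k e)"
| "embed_com k _ = Skip"

definition frame_embeds :: "nat \<Rightarrow> nat list \<Rightarrow> (name list \<times> name \<Rightarrow> nat) \<Rightarrow> frame \<Rightarrow> frame \<Rightarrow> bool" where
  "frame_embeds k inp fs fr fo \<longleftrightarrow>
     (\<forall>x<k. fvars fo x = fvars fr x) \<and> (\<forall>a<k. farrs fo a = farrs fr a) \<and>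
     fvars fo (k+3) = length inp \<and> farrs fo (k+1) = nth_default 0 inp \<and>
     (\<forall>f. farrs fo (k+2) f = fs ([], f)) \<and>
     (\<forall>I f. farrs fo (k+3) (prod_encode (I, f)) = fs ([I], f))"

lemma aval_embed_expr:
  "max_name_expr e < k \<Longrightarrow> fpath fr = [] \<Longrightarrow> frame_embeds k inp fs fr fo \<Longrightarrow>
   aval inp' fs' fo (embed_expr k e) = aval inp fs fr e"
  by (induction e) (auto simp: frame_embeds_def nth_default_def Let_def)

definition simulates :: "nat \<Rightarrow> nat list \<Rightarrow> config \<Rightarrow> config \<Rightarrow> bool" where
  "simulates k inp cP cO \<longleftrightarrow> (\<exists>fr fo. stack cP = [fr] \<and> stack cO = [fo] \<and> fpath fr = [] \<and>
     fcont fo = map (embed_com k) (fcont fr) @ [finish k] \<and>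
     (\<forall>c\<in>set (fcont fr). max_name_com c < k) \<and> frame_embeds k inp (flds cP) fr fo \<and>
     fvars fo (k+4) = bot_state (outs cP) \<and> outs cO = [])"

definition at_finish :: "nat \<Rightarrow> nat \<Rightarrow> config \<Rightarrow> bool" where
  "at_finish k s c \<longleftrightarrow>
     (\<exists>fo rest. stack c = [fo] \<and> fcont fo = finish k # rest \<and> fvars fo (k+4) = s \<and> outs c = [])"

lemma simulates_step:
  assumes sim: "simulates k inp cP cO" and step: "step (SNode empty_comp []) inp cP = Some cP'"
  shows "(stack cP' = [] \<and> outs cP' = outs cP \<and> at_finish k (bot_state (outs cP)) cO)
       \<or> (\<exists>cO'. step T inp' cO = Some cO' \<and> simulates k inp cP' cO')"
proof -
  obtain fr fo where fr: "stack cP = [fr]" "stack cO = [fo]" "fpath fr = []"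
    "fcont fo = map (embed_com k) (fcont fr) @ [finish k]" "\<forall>c\<in>set (fcont fr). max_name_com c < k"
    "frame_embeds k inp (flds cP) fr fo" "fvars fo (k+4) = bot_state (outs cP)" "outs cO = []"
    using sim unfolding simulates_def by blast
  note av = aval_embed_expr[OF _ fr(3) fr(6)]
  show ?thesis
  proof (cases "fcont fr")
    case Nil
    then show ?thesis using step fr by (auto simp: do_return_def at_finish_def)
  next
    case (Cons c cs)
    then have "max_name_com c < k" "\<forall>c\<in>set cs. max_name_com c < k" using fr(5) by auto
    then show ?thesis using step fr Cons
      by (cases c) (auto simp: Let_def simulates_def at_finish_def frame_embeds_def av
          aval_bot_step_expr bot_state_snoc prod_encode_eq do_return_def do_call_def code_at_def
          empty_comp_def)
  qed
qed

lemma simulates_run: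
  assumes "simulates k inp cP cO" and "steps (SNode empty_comp []) inp n cP = Some cF"
    and "stack cF = []"
  shows "\<exists>cX. reaches T inp' cO cX \<and> at_finish k (bot_state (outs cF)) cX"
  using assms
proof (induction n arbitrary: cP cO)
  case 0
  then show ?case by (auto simp: simulates_def)
next
  case (Suc n)
  obtain cP' where step: "step (SNode empty_comp []) inp cP = Some cP'"
    and run: "steps (SNode empty_comp []) inp n cP' = Some cF"
    using Suc.prems(2) by (auto split: option.splits)
  from simulates_step[OF Suc.prems(1) step, of T inp'] show ?case
  proof
    assume halted: "stack cP' = [] \<and> outs cP' = outs cP \<and> at_finish k (bot_state (outs cP)) cO"
    then have "cF = cP'"
      using run by (cases n) auto
    with halted show ?thesis by (auto intro: reaches_refl)
  next
    assume "\<exists>cO'. step T inp' cO = Some cO' \<and> simulates k inp cP' cO'"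
    then obtain cO' where "step T inp' cO = Some cO'" and "simulates k inp cP' cO'" by blast
    with Suc.IH[OF _ run Suc.prems(3)] show ?thesis
      by (meson reaches_step reaches_trans)
  qed
qed

lemma finish_halts: "at_finish k 2 c \<Longrightarrow> reaches T inp c (c\<lparr>stack := [], outs := [0]\<rparr>)"
  unfolding at_finish_def reaches_def
  by (auto simp: finish_def do_return_def numeral_eq_Suc intro!: exI[of _ 4])

lemma finish_diverges:
  assumes "at_finish k s c" and "s \<noteq> 2"
  shows "diverges T inp c"
proof -
  obtain fo rest where fo: "stack c = [fo]" "fcont fo = finish k # rest" "fvars fo (k+4) = s"
    using assms(1) unfolding at_finish_def by blast
  let ?cL = "c\<lparr>stack := [fo\<lparr>fcont := loop_forever # rest\<rparr>]\<rparr>"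
  have "reaches T inp c ?cL"
    using fo assms(2) by (intro reaches_step) (simp add: finish_def)
  moreover have "steps T inp 2 ?cL = Some ?cL"
    by (simp add: loop_forever_def numeral_2_eq_2)
  then have "diverges T inp ?cL"
    by (intro diverges_if_cycle[of _ _ 1]) (simp add: numeral_2_eq_2)
  ultimately show ?thesis by (rule diverges_if_reaches)
qed

section \<open>Self-reproduction\<close>

lemma BAssign_eq:
  "fr' = fr\<lparr>fvars := (fvars fr)(x := aval inp fs fr e)\<rparr> \<Longrightarrow> big_step inp fs (Assign x e) fr fr'"
  by (simp add: BAssign)

lemma nth_default_snoc: "(nth_default 0 xs)(length xs := v) = nth_default 0 (xs @ [v])"
  by (auto simp: nth_default_def nth_append fun_eq_iff)

lemma nth_default_Nil_fun: "nth_default 0 [] = (\<lambda>_. 0)"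
  by (simp add: fun_eq_iff)

fun store_list :: "nat \<Rightarrow> nat \<Rightarrow> nat list \<Rightarrow> com" where
  "store_list k j [] = Skip"
| "store_list k j (r # rs) = Seq (ArrWrite k (N j) (N r)) (store_list k (Suc j) rs)"

definition store_data :: "nat \<Rightarrow> nat list \<Rightarrow> com" where
  "store_data k D = Seq (Assign k (N (length D))) (store_list k 0 D)"

lemma big_step_store_list:
  "farrs fr k = nth_default 0 xs \<Longrightarrow> length xs = j \<Longrightarrow>
   big_step inp fs (store_list k j rs) fr (fr\<lparr>farrs := (farrs fr)(k := nth_default 0 (xs @ rs))\<rparr>)"
proof (induction rs arbitrary: fr xs j)
  case Nil
  then show ?case by (simp add: BSkip flip: Nil.prems(1))
next
  case (Cons r rs)
  let ?fr = "fr\<lparr>farrs := (farrs fr)(k := nth_default 0 (xs @ [r]))\<rparr>"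
  have "big_step inp fs (ArrWrite k (N j) (N r)) fr ?fr"
    using BArrWrite[of inp fs k "N j" "N r" fr] Cons.prems(1)
    by (simp add: nth_default_snoc flip: Cons.prems(2))
  moreover have "big_step inp fs (store_list k (Suc j) rs) ?fr
      (fr\<lparr>farrs := (farrs fr)(k := nth_default 0 (xs @ r # rs))\<rparr>)"
    using Cons.IH[of ?fr "xs @ [r]" "Suc j"] Cons.prems(2)
    by (simp add: fun_upd_same del: fun_upd_apply)
  ultimately show ?case unfolding store_list.simps by (rule BSeq)
qed

lemma big_step_store_data:
  "farrs fr k = (\<lambda>_. 0) \<Longrightarrow> big_step inp fs (store_data k D) fr
     (fr\<lparr>fvars := (fvars fr)(k := length D), farrs := (farrs fr)(k := nth_default 0 D)\<rparr>)"
proof -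
  assume empty: "farrs fr k = (\<lambda>_. 0)"
  let ?fr = "fr\<lparr>fvars := (fvars fr)(k := aval inp fs fr (N (length D)))\<rparr>"
  have "big_step inp fs (store_list k 0 D) ?fr
      (?fr\<lparr>farrs := (farrs ?fr)(k := nth_default 0 ([] @ D))\<rparr>)"
    using empty by (intro big_step_store_list) (simp_all add: nth_default_Nil_fun)
  then show ?thesis
    unfolding store_data_def by (auto intro: BSeq[OF BAssign])
qed

definition with_buffer :: "nat \<Rightarrow> nat list \<Rightarrow> frame \<Rightarrow> frame" where
  "with_buffer k xs fr =
     fr\<lparr>fvars := (fvars fr)(k+1 := length xs), farrs := (farrs fr)(k+1 := nth_default 0 xs)\<rparr>"

fun buffer_indep :: "nat \<Rightarrow> expr \<Rightarrow> bool" where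
  "buffer_indep k (N n) = True"
| "buffer_indep k (V x) = (x \<noteq> k+1)"
| "buffer_indep k (ArrRead a (V x)) = (a \<noteq> k+1 \<and> x \<noteq> k+1)"
| "buffer_indep k _ = False"

lemma aval_with_buffer: "buffer_indep k e \<Longrightarrow> aval inp fs (with_buffer k xs fr) e = aval inp fs fr e"
  by (induction k e rule: buffer_indep.induct) (auto simp: with_buffer_def)

definition push :: "nat \<Rightarrow> expr \<Rightarrow> com" where
  "push k e = Seq (ArrWrite (k+1) (V (k+1)) e) (Assign (k+1) (Plus (V (k+1)) (N 1)))"

definition push_all :: "nat \<Rightarrow> expr list \<Rightarrow> com" where
  "push_all k es = foldr (\<lambda>e c. Seq (push k e) c) es Skip"

lemma big_step_push:
  "buffer_indep k e \<Longrightarrow>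
   big_step inp fs (push k e) (with_buffer k xs fr) (with_buffer k (xs @ [aval inp fs fr e]) fr)"
  unfolding push_def
  by (rule BSeq[OF BArrWrite BAssign_eq])
    (use aval_with_buffer[of k e inp fs xs fr] in \<open>simp add: with_buffer_def nth_default_snoc\<close>)

lemma big_step_push_all:
  "\<forall>e\<in>set es. buffer_indep k e \<Longrightarrow>
   big_step inp fs (push_all k es) (with_buffer k xs fr)
     (with_buffer k (xs @ map (aval inp fs fr) es) fr)"
proof (induction es arbitrary: xs)
  case Nil
  then show ?case by (simp add: push_all_def BSkip)
next
  case (Cons e es)
  then have "big_step inp fs (push k e) (with_buffer k xs fr)
      (with_buffer k (xs @ [aval inp fs fr e]) fr)"
    and "big_step inp fs (push_all k es) (with_buffer k (xs @ [aval inp fs fr e]) fr)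
      (with_buffer k ((xs @ [aval inp fs fr e]) @ map (aval inp fs fr) es) fr)"
    using Cons.IH[of "xs @ [aval inp fs fr e]"] by (simp_all add: big_step_push)
  then show ?case by (auto simp: push_all_def intro: BSeq)
qed

lemma map_aval_N [simp]: "map (aval inp fs fr \<circ> N) xs = xs"
  by (induction xs) auto

definition push_for :: "nat \<Rightarrow> expr list \<Rightarrow> com" where
  "push_for k es = Seq (Assign (k+2) (N 0))
     (While (Less (V (k+2)) (V k)) (Seq (push_all k es) (Assign (k+2) (Plus (V (k+2)) (N 1)))))"

lemma big_step_push_for:
  assumes indep: "\<forall>e\<in>set es. buffer_indep k e" and len: "fvars fr k = n"
    and vals: "\<And>j. j < n \<Longrightarrow> map (aval inp fs (fr\<lparr>fvars := (fvars fr)(k+2 := j)\<rparr>)) es = h j"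
  shows "big_step inp fs (push_for k es) (with_buffer k xs fr)
     (with_buffer k (xs @ concat (map h [0..<n])) (fr\<lparr>fvars := (fvars fr)(k+2 := n)\<rparr>))"
proof -
  define cnt where "cnt j = fr\<lparr>fvars := (fvars fr)(k+2 := j)\<rparr>" for j
  let ?body = "Seq (push_all k es) (Assign (k+2) (Plus (V (k+2)) (N 1)))"
  have loop: "big_step inp fs (While (Less (V (k+2)) (V k)) ?body) (with_buffer k ys (cnt j))
      (with_buffer k (ys @ concat (map h [j..<n])) (cnt n))" if "j \<le> n" for j ys
    using that
  proof (induction "n - j" arbitrary: j ys)
    case 0
    then have "j = n" by simp
    with len show ?case
      by (simp add: BWhileFalse with_buffer_def cnt_def)
  next
    case (Suc m)
    then have j: "j < n" by simp
    have "big_step inp fs (push_all k es) (with_buffer k ys (cnt j))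
        (with_buffer k (ys @ h j) (cnt j))"
      using big_step_push_all[OF indep, of inp fs ys "cnt j"] vals[OF j] by (simp add: cnt_def)
    then have body: "big_step inp fs ?body (with_buffer k ys (cnt j))
        (with_buffer k (ys @ h j) (cnt (Suc j)))"
      by (rule BSeq[OF _ BAssign_eq]) (simp add: with_buffer_def cnt_def fun_upd_twist)
    have rest: "big_step inp fs (While (Less (V (k+2)) (V k)) ?body)
        (with_buffer k (ys @ h j) (cnt (Suc j))) (with_buffer k (ys @ concat (map h [j..<n])) (cnt n))"
      using Suc.hyps(1)[of "Suc j" "ys @ h j"] Suc.hyps(2) j by (simp add: upt_conv_Cons)
    have "aval inp fs (with_buffer k ys (cnt j)) (Less (V (k+2)) (V k)) \<noteq> 0"
      using j len by (simp add: with_buffer_def cnt_def)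
    from BWhileTrue[OF this body rest] show ?case .
  qed
  have "big_step inp fs (Assign (k+2) (N 0)) (with_buffer k xs fr) (with_buffer k xs (cnt 0))"
    by (rule BAssign_eq) (simp add: with_buffer_def cnt_def fun_upd_twist)
  from BSeq[OF this loop[of 0 xs]] show ?thesis
    by (simp add: push_for_def cnt_def)
qed

definition enc_store_cell :: "nat \<Rightarrow> nat \<Rightarrow> nat \<Rightarrow> nat list" where
  "enc_store_cell k j r = [1,3,0,3] @ sx_enc (com_sx (ArrWrite k (N j) (N r)))"

lemma sx_enc_store_list:
  "sx_enc (com_sx (store_list k j rs)) =
     concat (map (\<lambda>i. enc_store_cell k (j + i) (rs ! i)) [0..<length rs]) @ [1,1,0,0]"
proof (induction rs arbitrary: j)
  case (Cons r rs)
  have "[0..<length (r # rs)] = 0 # map Suc [0..<length rs]"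
    by (simp only: length_Cons upt_conv_Cons[OF zero_less_Suc] map_Suc_upt)
  with Cons show ?case by (simp add: enc_store_cell_def comp_def)
qed simp

definition enc_main :: "nat \<Rightarrow> nat list \<Rightarrow> nat list" where
  "enc_main k D = [1,3,0,3] @ sx_enc (com_sx (store_data k D)) @ D"

lemma enc_main_eq:
  "enc_main k D = [1,3,0,3,1,3,0,3,1,3,0,1,0,k,1,2,0,0,0,length D] @
     concat (map (\<lambda>j. enc_store_cell k j (D ! j)) [0..<length D]) @ [1,1,0,0] @ D"
  by (simp add: enc_main_def store_data_def sx_enc_store_list)

text \<open>If D encodes a program Q, then enc_main k D encodes Seq (store_data k D) Q.  The program
  push_main k pushes enc_main k D, reading D from array k; its literals are the parts of
  enc_main_eq that do not depend on D.\<close>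

definition store_cell_exprs :: "nat \<Rightarrow> expr list" where
  "store_cell_exprs k =
     map N [1,3,0,3,1,4,0,2,0,k,1,2,0,0,0] @ [V (k+2)] @ map N [1,2,0,0,0] @ [ArrRead k (V (k+2))]"

definition push_main :: "nat \<Rightarrow> com" where
  "push_main k = Seq (push_all k (map N [1,3,0,3,1,3,0,3,1,3,0,1,0,k,1,2,0,0,0] @ [V k]))
     (Seq (push_for k (store_cell_exprs k))
     (Seq (push_all k (map N [1,1,0,0])) (push_for k [ArrRead k (V (k+2))])))"

lemma big_step_push_main:
  assumes "fvars fr k = length D" and "farrs fr k = nth_default 0 D"
  shows "big_step inp fs (push_main k) (with_buffer k xs fr)
    (with_buffer k (xs @ enc_main k D) (fr\<lparr>fvars := (fvars fr)(k+2 := length D)\<rparr>))"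
proof -
  let ?fr = "fr\<lparr>fvars := (fvars fr)(k+2 := length D)\<rparr>"
  define xs1 where "xs1 = xs @ [1,3,0,3,1,3,0,3,1,3,0,1,0,k,1,2,0,0,0,length D]"
  define xs2 where "xs2 = xs1 @ concat (map (\<lambda>j. enc_store_cell k j (D ! j)) [0..<length D])"
  define xs3 where "xs3 = xs2 @ [1,1,0,0]"
  have header: "big_step inp fs (push_all k (map N [1,3,0,3,1,3,0,3,1,3,0,1,0,k,1,2,0,0,0] @ [V k]))
      (with_buffer k xs fr) (with_buffer k xs1 fr)"
    using big_step_push_all[of "map N [1,3,0,3,1,3,0,3,1,3,0,1,0,k,1,2,0,0,0] @ [V k]" k inp fs xs fr]
      assms by (simp add: xs1_def)
  have cells: "big_step inp fs (push_for k (store_cell_exprs k)) (with_buffer k xs1 fr)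
      (with_buffer k xs2 ?fr)"
    unfolding xs2_def
    by (rule big_step_push_for)
      (use assms in \<open>auto simp: store_cell_exprs_def enc_store_cell_def nth_default_def\<close>)
  have trailer: "big_step inp fs (push_all k (map N [1,1,0,0])) (with_buffer k xs2 ?fr)
      (with_buffer k xs3 ?fr)"
    using big_step_push_all[of "map N [1,1,0,0]" k inp fs xs2 ?fr] by (simp add: xs3_def)
  have "big_step inp fs (push_for k [ArrRead k (V (k+2))]) (with_buffer k xs3 ?fr)
      (with_buffer k (xs3 @ concat (map (\<lambda>j. [D ! j]) [0..<length D]))
        (?fr\<lparr>fvars := (fvars ?fr)(k+2 := length D)\<rparr>))"
    by (rule big_step_push_for) (use assms in \<open>auto simp: nth_default_def\<close>)
  moreover have "concat (map (\<lambda>j. [D ! j]) [0..<length D]) = D"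
    by (simp only: concat_map_singleton map_nth)
  moreover have "xs3 @ D = xs @ enc_main k D"
    by (simp add: xs1_def xs2_def xs3_def enc_main_eq)
  ultimately have data: "big_step inp fs (push_for k [ArrRead k (V (k+2))]) (with_buffer k xs3 ?fr)
      (with_buffer k (xs @ enc_main k D) ?fr)"
    by simp
  show ?thesis
    unfolding push_main_def by (rule BSeq[OF header BSeq[OF cells BSeq[OF trailer data]]])
qed

text \<open>The encoding of the diagonal instance is enc_inst_prefix @ E @ enc_comp_prefix @ E, where E
  encodes the main body, which occurs once in the component library and once as the base
  component; enc_comp_prefix encodes the diagonal component up to its main body.\<close>

definition enc_comp_prefix :: "nat list" where
  "enc_comp_prefix = [1,4,0,0,1,1,0,0,1,0,1,1,1,4,0,0,0,0,1,0]"

definition enc_inst_prefix :: "nat list" where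
  "enc_inst_prefix = [1,5,0,0,1,1,1,2,1,0,0,0,1,1,1,3,0,0,1,0,1,0,1,1] @ enc_comp_prefix"

definition push_instance :: "nat \<Rightarrow> com" where
  "push_instance k = Seq (push_all k (map N enc_inst_prefix)) (Seq (push_main k)
     (Seq (push_all k (map N enc_comp_prefix)) (Seq (push_main k) (Assign (k+3) (V (k+1))))))"

lemma big_step_push_instance:
  assumes "fvars fr k = length D" and "farrs fr k = nth_default 0 D"
  defines "X \<equiv> enc_inst_prefix @ enc_main k D @ enc_comp_prefix @ enc_main k D"
  shows "big_step inp fs (push_instance k) (with_buffer k [] fr)
    (with_buffer k X (fr\<lparr>fvars := (fvars fr)(k+2 := length D, k+3 := length X)\<rparr>))"
proof -
  let ?fr = "fr\<lparr>fvars := (fvars fr)(k+2 := length D)\<rparr>"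
  have prefix: "big_step inp fs (push_all k (map N enc_inst_prefix)) (with_buffer k [] fr)
      (with_buffer k enc_inst_prefix fr)"
    using big_step_push_all[of "map N enc_inst_prefix" k inp fs "[]" fr] by simp
  have main1: "big_step inp fs (push_main k) (with_buffer k enc_inst_prefix fr)
      (with_buffer k (enc_inst_prefix @ enc_main k D) ?fr)"
    using assms by (intro big_step_push_main)
  have comp_prefix: "big_step inp fs (push_all k (map N enc_comp_prefix))
      (with_buffer k (enc_inst_prefix @ enc_main k D) ?fr)
      (with_buffer k (enc_inst_prefix @ enc_main k D @ enc_comp_prefix) ?fr)"
    using big_step_push_all[of "map N enc_comp_prefix" k inp fs "enc_inst_prefix @ enc_main k D" ?fr]
    by simp
  have main2: "big_step inp fs (push_main k)
      (with_buffer k (enc_inst_prefix @ enc_main k D @ enc_comp_prefix) ?fr) (with_buffer k X ?fr)"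
    using big_step_push_main[of ?fr k D inp fs "enc_inst_prefix @ enc_main k D @ enc_comp_prefix"] assms
    by (simp add: X_def)
  have input_length: "big_step inp fs (Assign (k+3) (V (k+1))) (with_buffer k X ?fr)
      (with_buffer k X (fr\<lparr>fvars := (fvars fr)(k+2 := length D, k+3 := length X)\<rparr>))"
    by (rule BAssign_eq) (simp add: with_buffer_def fun_upd_twist)
  show ?thesis
    unfolding push_instance_def
    by (rule BSeq[OF prefix BSeq[OF main1 BSeq[OF comp_prefix BSeq[OF main2 input_length]]]])
qed

section \<open>The diagonal instance\<close>

definition scratch :: "com \<Rightarrow> nat" where
  "scratch P = Suc (max_name_com P)"

definition diag_body :: "com \<Rightarrow> com" where
  "diag_body P =
     Seq (push_instance (scratch P)) (Seq (embed_com (scratch P) P) (finish (scratch P)))"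

definition diag_data :: "com \<Rightarrow> nat list" where
  "diag_data P = sx_enc (com_sx (diag_body P))"

definition diag_main :: "com \<Rightarrow> com" where
  "diag_main P = Seq (store_data (scratch P) (diag_data P)) (diag_body P)"

definition diag_comp :: "com \<Rightarrow> comp" where
  "diag_comp P = \<lparr>cname = 0, cprov = [0], creq = [], ccode = [(0, main_fn, [], diag_main P)]\<rparr>"

definition unit_iface :: iface where
  "unit_iface = \<lparr>iname = 0, ifuns = [], ifields = []\<rparr>"

definition diag_inst :: "com \<Rightarrow> esc_inst" where
  "diag_inst P = \<lparr>nvars = 0, reqs = [([], 0)], lint = [unit_iface], lcomp = [diag_comp P],
     base = diag_comp P\<rparr>"

definition diag_sys :: "com \<Rightarrow> systree" where
  "diag_sys P = SNode (diag_comp P) []"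

lemma enc_inst_diag_inst:
  "enc_inst (diag_inst P) = enc_inst_prefix @ enc_main (scratch P) (diag_data P) @
     enc_comp_prefix @ enc_main (scratch P) (diag_data P)"
proof -
  have "sx_enc (com_sx (diag_main P)) = enc_main (scratch P) (diag_data P)"
    by (simp add: diag_main_def enc_main_def diag_data_def)
  then show ?thesis
    by (simp add: enc_inst_def diag_inst_def diag_comp_def comp_sx_def natl_def iface_sx_def
        unit_iface_def enc_inst_prefix_def enc_comp_prefix_def main_fn_def)
qed

lemma diag_main_simulates:
  "\<exists>cO. reaches T inp (init_config (diag_main P)) cO \<and>
     simulates (scratch P) (enc_inst (diag_inst P)) (init_config P) cO"
proof -
  define k where "k = scratch P"
  define D where "D = diag_data P"
  define X where "X = enc_inst (diag_inst P)"
  define c0 where "c0 = init_config (diag_main P)"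
  define fr0 where
    "fr0 = \<lparr>fpath = [], fcont = [], fvars = (\<lambda>_. 0::nat), farrs = (\<lambda>_ _. 0::nat), fret = 0\<rparr>"
  define frD where
    "frD = fr0\<lparr>fvars := (fvars fr0)(k := length D), farrs := (farrs fr0)(k := nth_default 0 D)\<rparr>"
  define frX where
    "frX = with_buffer k X (frD\<lparr>fvars := (fvars frD)(k+2 := length D, k+3 := length X)\<rparr>)"
  have "reaches T inp c0 (c0\<lparr>stack := [fr0\<lparr>fcont := [store_data k D, diag_body P]\<rparr>]\<rparr>)"
    by (intro reaches_step) (simp add: c0_def init_config_def fr0_def diag_main_def k_def D_def)
  also have "reaches T inp \<dots> (c0\<lparr>stack := [frD\<lparr>fcont := [diag_body P]\<rparr>]\<rparr>)"
  proof -
    have "big_step inp (flds c0) (store_data k D) fr0 frD"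
      using big_step_store_data[of fr0 k inp "flds c0" D] by (simp add: frD_def fr0_def)
    from big_step_reaches[OF this, of "c0\<lparr>stack := [fr0\<lparr>fcont := [store_data k D, diag_body P]\<rparr>]\<rparr>"]
    show ?thesis by simp
  qed
  also have "reaches T inp \<dots>
      (c0\<lparr>stack := [frD\<lparr>fcont := [push_instance k, Seq (embed_com k P) (finish k)]\<rparr>]\<rparr>)"
    by (intro reaches_step) (simp add: diag_body_def k_def)
  also have "reaches T inp \<dots> (c0\<lparr>stack := [frX\<lparr>fcont := [Seq (embed_com k P) (finish k)]\<rparr>]\<rparr>)"
  proof -
    have "with_buffer k [] frD = frD"
      by (simp add: with_buffer_def frD_def fr0_def fun_eq_iff)
    moreover have "big_step inp (flds c0) (push_instance k) (with_buffer k [] frD) frX"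
      using big_step_push_instance[of frD k D inp "flds c0"]
      by (simp add: frX_def X_def k_def D_def enc_inst_diag_inst frD_def)
    ultimately have "big_step inp (flds c0) (push_instance k) frD frX"
      by simp
    from big_step_reaches[OF this,
        of "c0\<lparr>stack := [frD\<lparr>fcont := [push_instance k, Seq (embed_com k P) (finish k)]\<rparr>]\<rparr>"]
    show ?thesis by simp
  qed
  also have "reaches T inp \<dots> (c0\<lparr>stack := [frX\<lparr>fcont := [embed_com k P, finish k]\<rparr>]\<rparr>)"
    by (intro reaches_step) simp
  finally have "reaches T inp c0 (c0\<lparr>stack := [frX\<lparr>fcont := [embed_com k P, finish k]\<rparr>]\<rparr>)" .
  moreover have
    "simulates k X (init_config P) (c0\<lparr>stack := [frX\<lparr>fcont := [embed_com k P, finish k]\<rparr>]\<rparr>)"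
    unfolding simulates_def frame_embeds_def
    by (auto simp: init_config_def c0_def frX_def frD_def fr0_def with_buffer_def k_def scratch_def
        bot_state_def)
  ultimately show ?thesis
    unfolding c0_def k_def X_def by blast
qed

lemma com_refs_push_all: "com_refs (push_all k es) = (\<Union>e\<in>set es. expr_refs e)"
  by (induction es) (auto simp: push_all_def push_def)

lemma com_refs_store_list: "com_refs (store_list k j rs) = {}"
  by (induction rs arbitrary: j) auto

lemma expr_refs_embed_expr: "expr_refs (embed_expr k e) = {}"
  by (induction k e rule: embed_expr.induct) auto

lemma com_refs_embed_com: "com_refs (embed_com k c) = {}"
  by (induction k c rule: embed_com.induct)
    (auto simp: expr_refs_embed_expr bot_step_expr_def finish_def loop_forever_def Let_def)

lemma com_refs_diag_main: "com_refs (diag_main P) = {}"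
  by (simp add: diag_main_def diag_body_def store_data_def push_instance_def push_main_def
      push_for_def store_cell_exprs_def com_refs_push_all com_refs_store_list com_refs_embed_com finish_def
      loop_forever_def)

lemma valid_diag_inst: "valid_instance (diag_inst P)"
  by (simp add: valid_instance_def diag_inst_def wf_lint_def wf_iface_def wf_comp_def diag_comp_def
      unit_iface_def com_refs_diag_main)

lemma valid_sys_diag_comp_iff: "valid_sys [diag_comp P] {} S \<longleftrightarrow> S = diag_sys P"
proof
  show "valid_sys [diag_comp P] {} S \<Longrightarrow> S = diag_sys P"
    by (erule valid_sys.cases) (auto simp: diag_comp_def diag_sys_def)
  show "S = diag_sys P \<Longrightarrow> valid_sys [diag_comp P] {} S"
    by (auto intro: valid_sys.intros simp: diag_comp_def diag_sys_def)
qed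

lemma working_diag_inst_iff:
  "working (diag_inst P) S \<longleftrightarrow> S = diag_sys P \<and> sys_outputs (diag_sys P) [] 0"
proof -
  have "root_comp (diag_sys P) = diag_comp P"
    by (simp add: diag_sys_def)
  then show ?thesis
    by (auto simp: working_def valid_sys_diag_comp_iff diag_inst_def)
qed

lemma sys_outputs_diag_sys_iff:
  assumes "run_prog P (enc_inst (diag_inst P)) n = Some out"
  shows "sys_outputs (diag_sys P) [] 0 \<longleftrightarrow> out = [1, 0]"
proof -
  let ?k = "scratch P" and ?S = "diag_sys P" and ?c0 = "init_config (diag_main P)"
  obtain cF
    where cF: "steps (SNode empty_comp []) (enc_inst (diag_inst P)) n (init_config P) = Some cF"
      "stack cF = []" "outs cF = out"
    using assms by (auto simp: run_prog_def run_in_def split: option.splits if_splits)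
  obtain cO where "reaches ?S [] ?c0 cO"
    and "simulates ?k (enc_inst (diag_inst P)) (init_config P) cO"
    using diag_main_simulates by blast
  with simulates_run[OF _ cF(1,2)] cF(3) obtain cX
    where run: "reaches ?S [] ?c0 cX" and fin: "at_finish ?k (bot_state out) cX"
    by (meson reaches_trans)
  have run_sys: "run_sys ?S [] = run_in ?S (diag_main P) []"
    by (simp add: fun_eq_iff run_sys_def diag_sys_def diag_comp_def)
  show ?thesis
  proof
    assume "out = [1, 0]"
    then have "at_finish ?k 2 cX"
      using fin bot_state_eq_2_iff by metis
    with run have "reaches ?S [] ?c0 (cX\<lparr>stack := [], outs := [0]\<rparr>)"
      by (blast intro: reaches_trans finish_halts)
    then show "sys_outputs ?S [] 0"
      using run_in_reaches_halt by (fastforce simp: sys_outputs_def sys_input_def run_sys)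
  next
    assume "sys_outputs ?S [] 0"
    then obtain m where "run_in ?S (diag_main P) [] m = Some [0]"
      by (auto simp: sys_outputs_def sys_input_def run_sys)
    moreover have "diverges ?S [] ?c0" if "out \<noteq> [1, 0]"
      using run fin that finish_diverges diverges_if_reaches bot_state_eq_2_iff by metis
    ultimately show "out = [1, 0]"
      using run_in_diverges by fastforce
  qed
qed

lemma enc_ans_eq_bot_iff: "enc_ans ans = [1, 0] \<longleftrightarrow> ans = None"
  by (cases ans) (simp_all add: enc_ans_def)

theorem mainTheorem1:
  fixes Rew :: "systree \<Rightarrow> nat" and Env :: "systree \<Rightarrow> nat list"
  assumes "\<forall>S. 0 < Rew S"
    and "poly_time_sys (\<lambda>S. [Rew S])"
    and "poly_time_sys Env"
  shows "\<not> (\<exists>P. solves_ESCreate Rew Env P)"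
proof
  assume "\<exists>P. solves_ESCreate Rew Env P"
  then obtain P where "solves_ESCreate Rew Env P" ..
  then obtain n ans where correct: "esc_correct Rew Env (diag_inst P) ans"
    and run: "run_prog P (enc_inst (diag_inst P)) n = Some (enc_ans ans)"
    using valid_diag_inst unfolding solves_ESCreate_def by blast
  have "working (diag_inst P) (diag_sys P) \<longleftrightarrow> ans = None"
    unfolding working_diag_inst_iff sys_outputs_diag_sys_iff[OF run] enc_ans_eq_bot_iff by simp
  with correct show False
    by (cases ans) (auto simp: esc_correct_def working_diag_inst_iff)
qed

end
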